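(* Let $P$ be a set of $n$ points in general position in the plane such that the number $m$ of points of $P$ on the boundary of its convex hull satisfies $m\geq 6$. If $P$ has a good-triangle, then $\mu(D(P))\geq\binom{n}{2}-9$.
   Context: General position means no three points collinear. Let $\mathcal{P}$ be the set of all closed segments with both endpoints in $P$, and let $v_1,\dots,v_m$ be the points of $P$ on the boundary of the convex hull of $P$, in clockwise cyclic order, indices taken mod $m$. For a point $x\in P$ not on the convex hull boundary and $i\in[m]$, the triangle $\triangle$ with sides $xv_i$, $xv_{i+1}$, $v_iv_{i+1}$ is a good-triangle of $P$ if (i) $x$ lies in the interior of the quadrilateral $v_iv_{i+1}v_{i+2}v_{i+m-1}$, and (ii) every segment $uv\in\mathcal{P}$ other than the three sides of $\triangle$ that intersects all three sides of $\triangle$ belongs to $\{v_iv_{i+2},v_iv_{i+3},v_{i+1}v_{i+m-2},v_{i+1}v_{i+m-1}\}$. $D(P)$ is the graph with vertex set $\mathcal{P}$, two segments adjacent iff disjoint. For a graph $G$ and $U\subseteq V(G)$, two distinct vertices $x,y\in U$ are $U$-mutually visible if $G$ contains a shortest $x$-$y$ path none of whose internal vertices lies in $U$; $U$ is a mutual-visibility set if every two distinct vertices of $U$ are $U$-mutually visible. $\mu(G)$ is the maximum size of a mutual-visibility set of $G$. *)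

theory Defs
  imports "HOL-Analysis.Analysis"
begin

type_synonym pt = "real \<times> real"

definition general_position :: "pt set \<Rightarrow> bool" where
  "general_position P \<longleftrightarrow>
     (\<forall>a\<in>P. \<forall>b\<in>P. \<forall>c\<in>P. a \<noteq> b \<and> a \<noteq> c \<and> b \<noteq> c \<longrightarrow> \<not> collinear {a, b, c})"

definition hull_pts :: "pt set \<Rightarrow> pt set" where
  "hull_pts P = P \<inter> frontier (convex hull P)"

definition cross :: "pt \<Rightarrow> pt \<Rightarrow> real" where
  "cross a b = fst a * snd b - snd a * fst b"

text \<open>v 0, ..., v (m-1) enumerate the hull points of P in clockwise cyclic order:
  every other point of P lies strictly to the right of each directed hull edge.\<close>
definition clockwise_hull_enum :: "pt set \<Rightarrow> nat \<Rightarrow> (nat \<Rightarrow> pt) \<Rightarrow> bool" where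
  "clockwise_hull_enum P m v \<longleftrightarrow>
     m = card (hull_pts P) \<and> bij_betw v {..<m} (hull_pts P) \<and>
     (\<forall>i<m. \<forall>p\<in>P. p \<noteq> v i \<and> p \<noteq> v (Suc i mod m) \<longrightarrow>
        cross (v (Suc i mod m) - v i) (p - v i) < 0)"

definition segs :: "pt set \<Rightarrow> pt set set" where
  "segs P = {closed_segment a b | a b. a \<in> P \<and> b \<in> P \<and> a \<noteq> b}"

definition good_triangle :: "pt set \<Rightarrow> nat \<Rightarrow> (nat \<Rightarrow> pt) \<Rightarrow> pt \<Rightarrow> nat \<Rightarrow> bool" where
  "good_triangle P m v x i \<longleftrightarrow>
     (let w = (\<lambda>j. v (j mod m)) in
       x \<in> P \<and> x \<notin> hull_pts P \<and> i < m \<and>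
       x \<in> interior (convex hull {w i, w (i+1), w (i+2), w (i+m-1)}) \<and>
       (\<forall>s\<in>segs P.
          s \<notin> {closed_segment x (w i), closed_segment x (w (i+1)), closed_segment (w i) (w (i+1))} \<and>
          s \<inter> closed_segment x (w i) \<noteq> {} \<and>
          s \<inter> closed_segment x (w (i+1)) \<noteq> {} \<and>
          s \<inter> closed_segment (w i) (w (i+1)) \<noteq> {} \<longrightarrow>
          s \<in> {closed_segment (w i) (w (i+2)), closed_segment (w i) (w (i+3)),
                closed_segment (w (i+1)) (w (i+m-2)), closed_segment (w (i+1)) (w (i+m-1))}))"

definition has_good_triangle :: "pt set \<Rightarrow> bool" where
  "has_good_triangle P \<longleftrightarrow>
     (\<exists>v. clockwise_hull_enum P (card (hull_pts P)) v \<and>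
        (\<exists>x i. good_triangle P (card (hull_pts P)) v x i))"

definition is_walk :: "'a set \<Rightarrow> ('a \<Rightarrow> 'a \<Rightarrow> bool) \<Rightarrow> 'a list \<Rightarrow> 'a \<Rightarrow> 'a \<Rightarrow> bool" where
  "is_walk V E xs x y \<longleftrightarrow> xs \<noteq> [] \<and> hd xs = x \<and> last xs = y \<and> set xs \<subseteq> V \<and>
     (\<forall>i. Suc i < length xs \<longrightarrow> E (xs ! i) (xs ! Suc i))"

definition is_shortest_path :: "'a set \<Rightarrow> ('a \<Rightarrow> 'a \<Rightarrow> bool) \<Rightarrow> 'a list \<Rightarrow> 'a \<Rightarrow> 'a \<Rightarrow> bool" where
  "is_shortest_path V E xs x y \<longleftrightarrow> is_walk V E xs x y \<and>
     (\<forall>ys. is_walk V E ys x y \<longrightarrow> length xs \<le> length ys)"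

definition mutually_visible :: "'a set \<Rightarrow> ('a \<Rightarrow> 'a \<Rightarrow> bool) \<Rightarrow> 'a set \<Rightarrow> 'a \<Rightarrow> 'a \<Rightarrow> bool" where
  "mutually_visible V E U x y \<longleftrightarrow>
     (\<exists>xs. is_shortest_path V E xs x y \<and>
        (\<forall>i. 0 < i \<and> Suc i < length xs \<longrightarrow> xs ! i \<notin> U))"

definition mv_set :: "'a set \<Rightarrow> ('a \<Rightarrow> 'a \<Rightarrow> bool) \<Rightarrow> 'a set \<Rightarrow> bool" where
  "mv_set V E U \<longleftrightarrow> U \<subseteq> V \<and>
     (\<forall>x\<in>U. \<forall>y\<in>U. x \<noteq> y \<longrightarrow> mutually_visible V E U x y)"

definition mu :: "'a set \<Rightarrow> ('a \<Rightarrow> 'a \<Rightarrow> bool) \<Rightarrow> nat" where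
  "mu V E = Max {card U | U. mv_set V E U}"

definition D_adj :: "pt set \<Rightarrow> pt set \<Rightarrow> bool" where
  "D_adj s t \<longleftrightarrow> s \<inter> t = {}"

end

theory Submission
  imports Defs
begin

text \<open>Let \<open>R\<close> consist of the three sides of the good triangle \<open>x v\<^sub>i v\<^sub>i\<^sub>+\<^sub>1\<close>, the four
  segments \<open>v\<^sub>i v\<^sub>i\<^sub>+\<^sub>2\<close>, \<open>v\<^sub>i v\<^sub>i\<^sub>+\<^sub>3\<close>, \<open>v\<^sub>i\<^sub>+\<^sub>1 v\<^sub>i\<^sub>-\<^sub>2\<close>, \<open>v\<^sub>i\<^sub>+\<^sub>1 v\<^sub>i\<^sub>-\<^sub>1\<close> that may cross all
  three sides, and the hull edges \<open>v\<^sub>i\<^sub>+\<^sub>2 v\<^sub>i\<^sub>+\<^sub>3\<close> and \<open>v\<^sub>i\<^sub>-\<^sub>2 v\<^sub>i\<^sub>-\<^sub>1\<close>. Any two segments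
  outside \<open>R\<close> are either disjoint, hence adjacent in \<open>D(P)\<close>, or both disjoint from some
  segment of \<open>R\<close>, hence at distance 2 through a vertex outside the set. So the
  \<open>n choose 2 - 9\<close> or more segments outside \<open>R\<close> form a mutual-visibility set.

  The common disjoint segment is the hull edge \<open>v\<^sub>i v\<^sub>i\<^sub>+\<^sub>1\<close> unless one of the two segments
  ends at \<open>v\<^sub>i\<close> or \<open>v\<^sub>i\<^sub>+\<^sub>1\<close>. Reflecting the plane and reversing the enumeration exchanges
  \<open>v\<^sub>i\<close> and \<open>v\<^sub>i\<^sub>+\<^sub>1\<close> and maps \<open>R\<close> to itself, so only \<open>v\<^sub>i\<close> needs a case analysis,
  which uses orientation signs, the convexity of the hull and the defining property of
  the good triangle.\<close>

section \<open>Orientation and segments\<close>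

text \<open>Positive iff \<open>a, b, c\<close> is a left turn, so \<open>clockwise_hull_enum\<close> puts every other
  point of \<open>P\<close> at negative orientation with respect to each hull edge.\<close>
definition orient :: "pt \<Rightarrow> pt \<Rightarrow> pt \<Rightarrow> real" where
  "orient a b c = cross (b - a) (c - a)"

lemma orient_perms:
  "orient a b c = orient b c a" "orient a b c = orient c a b" "orient a b c = - orient a c b"
  "orient a b c = - orient b a c" "orient a b c = - orient c b a"
  unfolding orient_def cross_def by (simp_all add: algebra_simps)

lemma orient_degenerate [simp]: "orient a b a = 0" "orient a b b = 0" "orient a a b = 0"
  unfolding orient_def cross_def by simp_all

lemma orient_barycentric:
  "orient a b c * orient p q z =
     orient z b c * orient p q a + orient a z c * orient p q b + orient a b z * orient p q c"
  unfolding orient_def cross_def by (simp add: algebra_simps)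

lemma orient_grassmann_pluecker:
  "orient u a c * orient u w b = orient u a b * orient u w c + orient u b c * orient u w a"
  unfolding orient_def cross_def by (simp add: algebra_simps)

lemma orient_prod_swap: "orient (prod.swap a) (prod.swap b) (prod.swap c) = - orient a b c"
  unfolding orient_def cross_def by (simp add: algebra_simps)

lemma orient_eq_inner:
  "orient a b z = (- snd (b - a), fst (b - a)) \<bullet> z - (- snd (b - a), fst (b - a)) \<bullet> a"
  unfolding orient_def cross_def by (simp add: inner_prod_def algebra_simps)

lemma orient_eq_0_imp_collinear:
  assumes "orient a b c = 0"
  shows "collinear {a, b, c}"
proof (cases "b = a")
  case True
  then show ?thesis by (simp add: collinear_2)
next
  case False
  obtain u1 u2 v1 v2 where uv: "b - a = (u1, u2)" "c - a = (v1, v2)"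
    by (metis prod.exhaust)
  have cr: "u1 * v2 = u2 * v1"
    using assms uv by (simp add: orient_def cross_def)
  have nz: "u1 * u1 + u2 * u2 \<noteq> 0"
  proof -
    have "(u1, u2) \<noteq> (0, 0)"
      using False uv by (metis eq_iff_diff_eq_0 zero_prod_def)
    then show ?thesis
      by (simp add: sum_squares_eq_zero_iff)
  qed
  have "(u1 * u1 + u2 * u2) * v1 = (u1 * v1 + u2 * v2) * u1"
       "(u1 * u1 + u2 * u2) * v2 = (u1 * v1 + u2 * v2) * u2"
    using cr by algebra+
  then have "(v1, v2) = ((u1 * v1 + u2 * v2) / (u1 * u1 + u2 * u2)) *\<^sub>R (u1, u2)"
    using nz by (simp add: field_simps)
  then have "collinear {0, b - a, c - a}"
    unfolding uv by (metis collinear_lemma)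
  then have "collinear {b, a, c}"
    by (simp add: collinear_3)
  then show ?thesis
    by (simp add: insert_commute)
qed

lemma general_position_orient_neq_0:
  "\<lbrakk>general_position P; a \<in> P; b \<in> P; c \<in> P; a \<noteq> b; a \<noteq> c; b \<noteq> c\<rbrakk> \<Longrightarrow> orient a b c \<noteq> 0"
  unfolding general_position_def using orient_eq_0_imp_collinear by blast

lemma convex_orient_gt: "convex {z. c < orient a b z}"
  unfolding orient_eq_inner less_diff_eq by (rule convex_halfspace_gt)

lemma convex_orient_ge: "convex {z. c \<le> orient a b z}"
  unfolding orient_eq_inner le_diff_eq by (rule convex_halfspace_ge)

lemma convex_orient_le: "convex {z. orient a b z \<le> c}"
  unfolding orient_eq_inner diff_le_eq by (rule convex_halfspace_le)

lemma orient_nonneg_convex_hull: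
  assumes "z \<in> convex hull S" "\<And>y. y \<in> S \<Longrightarrow> 0 \<le> orient a b y"
  shows "0 \<le> orient a b z"
proof -
  have "convex hull S \<subseteq> {z. 0 \<le> orient a b z}"
    by (rule hull_minimal) (simp_all add: assms(2) subset_iff convex_orient_ge)
  then show ?thesis
    using assms(1) by blast
qed

lemma closed_segments_disjoint_if_separated:
  assumes "0 < orient a b p" "0 < orient a b q" "orient a b r \<le> 0" "orient a b r' \<le> 0"
  shows "closed_segment p q \<inter> closed_segment r r' = {}"
proof -
  have "closed_segment p q \<subseteq> {z. 0 < orient a b z}"
    using assms by (intro closed_segment_subset convex_orient_gt) auto
  moreover have "closed_segment r r' \<subseteq> {z. orient a b z \<le> 0}"
    using assms by (intro closed_segment_subset convex_orient_le) auto
  ultimately show ?thesis by fastforce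
qed

lemma closed_segments_disjoint_if_separated':
  assumes "orient a b p < 0" "orient a b q < 0" "0 \<le> orient a b r" "0 \<le> orient a b r'"
  shows "closed_segment p q \<inter> closed_segment r r' = {}"
  using assms by (intro closed_segments_disjoint_if_separated[of b a]) (auto simp: orient_perms(4)[of b a])

lemma closed_segment_disjoint_if_right:
  "orient a b p < 0 \<Longrightarrow> orient a b q < 0 \<Longrightarrow> closed_segment p q \<inter> closed_segment a b = {}"
  by (rule closed_segments_disjoint_if_separated'[of a b]) simp_all

lemma closed_segments_intersect_if_crossing:
  assumes "orient p q r * orient p q r' < 0" "orient r r' p * orient r r' q < 0"
  shows "closed_segment p q \<inter> closed_segment r r' \<noteq> {}"
proof -
  define \<alpha> where "\<alpha> = orient r r' p"
  define \<beta> where "\<beta> = orient r r' q"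
  define \<gamma> where "\<gamma> = orient p q r"
  define \<delta> where "\<delta> = orient p q r'"
  have ratio_01: "0 \<le> a / (a - b)" "a / (a - b) \<le> 1" if "a * b < 0" for a b :: real
    using that by (auto simp: mult_less_0_iff divide_simps)
  have ne: "\<alpha> - \<beta> \<noteq> 0" "\<gamma> - \<delta> \<noteq> 0"
    using assms unfolding \<alpha>_def \<beta>_def \<gamma>_def \<delta>_def by auto
  have same_point: "\<alpha> *\<^sub>R q - \<beta> *\<^sub>R p = \<delta> *\<^sub>R r - \<gamma> *\<^sub>R r'" "\<alpha> - \<beta> = \<delta> - \<gamma>"
    unfolding \<alpha>_def \<beta>_def \<gamma>_def \<delta>_def orient_def cross_def
    by (simp_all add: prod_eq_iff; algebra)+
  define z where "z = (1 / (\<alpha> - \<beta>)) *\<^sub>R (\<alpha> *\<^sub>R q - \<beta> *\<^sub>R p)"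
  have coeffs: "- \<beta> / (\<alpha> - \<beta>) = 1 - \<alpha> / (\<alpha> - \<beta>)"
    "\<delta> / (\<delta> - \<gamma>) = 1 - \<gamma> / (\<gamma> - \<delta>)" "- \<gamma> / (\<delta> - \<gamma>) = \<gamma> / (\<gamma> - \<delta>)"
    using ne by (simp_all add: field_simps)
  have "z = (- \<beta> / (\<alpha> - \<beta>)) *\<^sub>R p + (\<alpha> / (\<alpha> - \<beta>)) *\<^sub>R q"
    unfolding z_def by (simp add: divide_inverse scaleR_diff_right mult.commute)
  moreover have "z = (\<delta> / (\<delta> - \<gamma>)) *\<^sub>R r + (- \<gamma> / (\<delta> - \<gamma>)) *\<^sub>R r'"
    unfolding z_def same_point by (simp add: divide_inverse scaleR_diff_right mult.commute)
  ultimately have "z = (1 - \<alpha> / (\<alpha> - \<beta>)) *\<^sub>R p + (\<alpha> / (\<alpha> - \<beta>)) *\<^sub>R q"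
    and "z = (1 - \<gamma> / (\<gamma> - \<delta>)) *\<^sub>R r + (\<gamma> / (\<gamma> - \<delta>)) *\<^sub>R r'"
    by (simp_all only: coeffs)
  then have "z \<in> closed_segment p q" "z \<in> closed_segment r r'"
    using ratio_01[of \<alpha> \<beta>] ratio_01[of \<gamma> \<delta>] assms
    unfolding closed_segment_def \<alpha>_def \<beta>_def \<gamma>_def \<delta>_def by blast+
  then show ?thesis
    by blast
qed

lemma orient_mult_neg_if_segments_meet:
  assumes "closed_segment p q \<inter> closed_segment r r' \<noteq> {}" "orient r r' p \<noteq> 0" "orient r r' q \<noteq> 0"
  shows "orient r r' p * orient r r' q < 0"
proof (rule ccontr)
  assume "\<not> orient r r' p * orient r r' q < 0"
  then have "(0 < orient r r' p \<and> 0 < orient r r' q) \<or> (orient r r' p < 0 \<and> orient r r' q < 0)"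
    using assms(2,3) by (auto simp: mult_less_0_iff)
  then show False
    using assms(1) closed_segments_disjoint_if_separated[of r r' p q r r']
      closed_segments_disjoint_if_separated'[of r r' p q r r'] by auto
qed

lemma linear_prod_swap: "linear prod.swap"
  by (rule linearI) (simp_all add: prod_eq_iff)

lemma prod_swap_eq_iff [simp]: "prod.swap a = prod.swap b \<longleftrightarrow> a = b"
  by (metis swap_swap)

lemma prod_swap_image_eq_iff [simp]: "prod.swap ` A = prod.swap ` B \<longleftrightarrow> A = B"
  by (simp add: inj_image_eq_iff)

lemma prod_swap_image_Int_empty_iff [simp]: "prod.swap ` A \<inter> prod.swap ` B = {} \<longleftrightarrow> A \<inter> B = {}"
  by (simp add: image_Int[symmetric])

lemma prod_swap_doubleton_eq_iff:
  "{prod.swap a, prod.swap b} = {prod.swap c, prod.swap d} \<longleftrightarrow> {a, b} = {c, d}"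
  by (auto simp: doubleton_eq_iff)

lemma orient_neq_0_prod_swap_image:
  assumes "\<And>a b c. \<lbrakk>a \<in> P; b \<in> P; c \<in> P; a \<noteq> b; a \<noteq> c; b \<noteq> c\<rbrakk> \<Longrightarrow> orient a b c \<noteq> 0"
    and "a \<in> prod.swap ` P" "b \<in> prod.swap ` P" "c \<in> prod.swap ` P" "a \<noteq> b" "a \<noteq> c" "b \<noteq> c"
  shows "orient a b c \<noteq> 0"
proof -
  obtain a' b' c' where "a' \<in> P" "b' \<in> P" "c' \<in> P"
    and "a = prod.swap a'" "b = prod.swap b'" "c = prod.swap c'"
    using assms(2-4) by blast
  then show ?thesis
    using assms(1)[of a' b' c'] assms(5-7) orient_prod_swap[of a' b' c'] by auto
qed

lemma closed_segment_prod_swap: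
  "closed_segment (prod.swap a) (prod.swap b) = prod.swap ` closed_segment a b"
  by (rule closed_segment_linear_image[OF linear_prod_swap])

section \<open>The disjointness graph\<close>

lemma closed_segment_in_segs: "a \<in> P \<Longrightarrow> b \<in> P \<Longrightarrow> a \<noteq> b \<Longrightarrow> closed_segment a b \<in> segs P"
  unfolding segs_def by blast

lemma card_segs:
  assumes "finite P"
  shows "finite (segs P)" "card (segs P) = card P choose 2"
proof -
  let ?pairs = "{S. S \<subseteq> P \<and> card S = 2}"
  have segs_eq: "segs P = (\<lambda>S. convex hull S) ` ?pairs"
  proof (intro equalityI subsetI)
    fix s
    assume "s \<in> segs P"
    then obtain a b where "s = convex hull {a, b}" "a \<in> P" "b \<in> P" "a \<noteq> b"
      unfolding segs_def segment_convex_hull by blast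
    then show "s \<in> (\<lambda>S. convex hull S) ` ?pairs"
      by (intro image_eqI[of _ _ "{a, b}"]) auto
  next
    fix s
    assume "s \<in> (\<lambda>S. convex hull S) ` ?pairs"
    then obtain a b where "s = convex hull {a, b}" "a \<in> P" "b \<in> P" "a \<noteq> b"
      by (auto simp: card_2_iff)
    then show "s \<in> segs P"
      unfolding segs_def segment_convex_hull by blast
  qed
  have "inj_on (\<lambda>S. convex hull S) ?pairs"
  proof (rule inj_onI)
    fix S T
    assume "S \<in> ?pairs" "T \<in> ?pairs" "convex hull S = convex hull T"
    then obtain a b c d where "S = {a, b}" "T = {c, d}" "closed_segment a b = closed_segment c d"
      by (auto simp: card_2_iff segment_convex_hull)
    then show "S = T"
      by simp
  qed
  moreover have "finite ?pairs"
    using assms by (auto intro: finite_subset[of _ "Pow P"])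
  ultimately show "finite (segs P)" "card (segs P) = card P choose 2"
    unfolding segs_eq by (simp_all add: card_image n_subsets[OF assms])
qed

lemma is_walk_length_ge_2: "is_walk V E ys a b \<Longrightarrow> a \<noteq> b \<Longrightarrow> 2 \<le> length ys"
  by (cases ys; cases "tl ys") (auto simp: is_walk_def)

lemma is_walk_length_ge_3:
  assumes "is_walk V E ys a b" "a \<noteq> b" "\<not> E a b"
  shows "3 \<le> length ys"
proof -
  have "length ys \<noteq> 2"
  proof
    assume "length ys = 2"
    then obtain u v where "ys = [u, v]"
      by (auto simp: length_Suc_conv numeral_2_eq_2)
    then show False
      using assms(1,3) unfolding is_walk_def by force
  qed
  then show ?thesis
    using is_walk_length_ge_2[OF assms(1,2)] by linarith
qed

lemma mutually_visible_if_adjacent: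
  assumes "s \<in> V" "t \<in> V" "s \<noteq> t" "E s t"
  shows "mutually_visible V E U s t"
proof -
  have "is_walk V E [s, t] s t"
    using assms by (simp add: is_walk_def)
  moreover have "length [s, t] \<le> length ys" if "is_walk V E ys s t" for ys
    using is_walk_length_ge_2[OF that assms(3)] by simp
  ultimately show ?thesis
    unfolding mutually_visible_def is_shortest_path_def by (intro exI[of _ "[s, t]"]) auto
qed

lemma mutually_visible_if_common_neighbour:
  assumes "s \<in> V" "t \<in> V" "r \<in> V" "s \<noteq> t" "\<not> E s t" "E s r" "E r t" "r \<notin> U"
  shows "mutually_visible V E U s t"
proof -
  have "is_walk V E [s, r, t] s t"
    using assms by (auto simp: is_walk_def less_Suc_eq nth_Cons')
  moreover have "\<forall>i. 0 < i \<and> Suc i < length [s, r, t] \<longrightarrow> [s, r, t] ! i \<notin> U"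
    using assms(8) by (auto simp: less_Suc_eq)
  moreover have "length [s, r, t] \<le> length ys" if "is_walk V E ys s t" for ys
    using is_walk_length_ge_3[OF that assms(4,5)] by simp
  ultimately show ?thesis
    unfolding mutually_visible_def is_shortest_path_def by (intro exI[of _ "[s, r, t]"]) auto
qed

lemma card_le_mu:
  assumes "finite V" "mv_set V E U"
  shows "card U \<le> mu V E"
proof -
  have "{card U | U. mv_set V E U} \<subseteq> card ` Pow V"
    by (auto simp: mv_set_def)
  then have "finite {card U | U. mv_set V E U}"
    using assms(1) by (meson finite_Pow_iff finite_imageI finite_subset)
  then show ?thesis
    unfolding mu_def using assms(2) by (auto intro: Max_ge)
qed

section \<open>Clockwise convex polygons\<close>

lemma diff_mod_inj:
  fixes k l m c :: nat
  assumes "k < m" "l < m" "m \<le> c" "(c - k) mod m = (c - l) mod m"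
  shows "k = l"
proof -
  have "(c - k + (k + l)) mod m = (c - l + (k + l)) mod m"
    using assms(4) by (metis mod_add_left_eq)
  then have "(l + c) mod m = (k + c) mod m"
    using assms(1-3) by (simp add: algebra_simps)
  then have "l mod m = k mod m"
    by (simp add: nat_mod_eq_iff)
  then show ?thesis
    using assms(1,2) by simp
qed

locale clockwise_polygon =
  fixes P :: "pt set" and m :: nat and W :: "nat \<Rightarrow> pt"
  assumes W_mod: "W (k mod m) = W k"
    and W_in_P: "W k \<in> P"
    and inj_on_W: "inj_on W {..<m}"
    and edge_orient: "p \<in> P \<Longrightarrow> p \<noteq> W k \<Longrightarrow> p \<noteq> W (Suc k) \<Longrightarrow> orient (W k) (W (Suc k)) p < 0"
begin

lemma W_add_m [simp]: "W (m + k) = W k"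
  by (metis W_mod mod_add_self1)

lemma W_neq: "a < m \<Longrightarrow> b < m \<Longrightarrow> a \<noteq> b \<Longrightarrow> W a \<noteq> W b"
  using inj_on_W by (auto dest: inj_onD)

lemma orient_W_neg_step:
  assumes "Suc a < b" "b < c" "Suc c < m" "orient (W a) (W b) (W c) < 0"
  shows "orient (W a) (W b) (W (Suc c)) < 0"
proof -
  have right: "orient (W a) (W (Suc a)) (W k) < 0" if "k \<in> {b, c, Suc c}" for k
    using edge_orient[of "W k" a] that assms W_in_P W_neq by auto
  have "orient (W a) (W c) (W (Suc c)) < 0"
    using edge_orient[of "W a" c] assms W_in_P W_neq orient_perms(1)[of "W a" "W c" "W (Suc c)"]
    by simp
  then have "0 < orient (W a) (W b) (W c) * orient (W a) (W (Suc a)) (W (Suc c))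
      + orient (W a) (W c) (W (Suc c)) * orient (W a) (W (Suc a)) (W b)"
    using assms(4) right by (simp add: add_pos_pos mult_neg_neg)
  then have "0 < orient (W a) (W b) (W (Suc c)) * orient (W a) (W (Suc a)) (W c)"
    using orient_grassmann_pluecker[of "W a" "W b" "W (Suc c)" "W (Suc a)" "W c"] by simp
  with right[of c] show ?thesis
    by (simp add: zero_less_mult_iff)
qed

lemma orient_W_neg:
  assumes "a < b" "b < c" "c < m"
  shows "orient (W a) (W b) (W c) < 0"
proof (cases "b = Suc a")
  case True
  then show ?thesis
    using assms edge_orient[of "W c" a] W_in_P W_neq by simp
next
  case False
  from \<open>b < c\<close> have "Suc b \<le> c"
    by simp
  then show ?thesis
  proof (induct rule: dec_induct)
    case base
    then show ?case
      using edge_orient[of "W a" b] assms W_in_P W_neq orient_perms(1)[of "W a" "W b" "W (Suc b)"]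
      by simp
  next
    case (step n)
    then show ?case
      using orient_W_neg_step[of a b n] False assms by simp
  qed
qed

lemma orient_W:
  assumes "a < b" "b < c" "c < m"
  shows "orient (W a) (W b) (W c) < 0" "orient (W b) (W c) (W a) < 0" "orient (W c) (W a) (W b) < 0"
    "0 < orient (W a) (W c) (W b)" "0 < orient (W b) (W a) (W c)" "0 < orient (W c) (W b) (W a)"
  using orient_W_neg[OF assms] orient_perms[of "W a" "W b" "W c"] by linarith+

lemma W_mirror_Suc:
  assumes "0 < m"
  shows "W (m + 1 - Suc k mod m) = W (m - k mod m)"
proof (cases "Suc (k mod m) = m")
  case True
  then have "m - k mod m = 1"
    by linarith
  then show ?thesis
    using True W_add_m[of 1] by (simp add: mod_Suc)
next
  case False
  then show ?thesis
    by (simp add: mod_Suc)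
qed

text \<open>Reflection in the diagonal reverses orientations, and so does reversing the order of
  the vertices; the mirrored polygon starts with the images of \<open>W 1\<close>, \<open>W 0\<close>, \<open>W (m - 1)\<close>.\<close>
lemma clockwise_polygon_mirror:
  assumes "0 < m"
  shows "clockwise_polygon (prod.swap ` P) m (\<lambda>k. prod.swap (W (m + 1 - k mod m)))"
proof
  show "prod.swap (W (m + 1 - k mod m mod m)) = prod.swap (W (m + 1 - k mod m))" for k
    by simp
  show "prod.swap (W (m + 1 - k mod m)) \<in> prod.swap ` P" for k
    using W_in_P by blast
  show "inj_on (\<lambda>k. prod.swap (W (m + 1 - k mod m))) {..<m}"
  proof (rule inj_onI)
    fix k l
    assume kl: "k \<in> {..<m}" "l \<in> {..<m}"
      and "prod.swap (W (m + 1 - k mod m)) = prod.swap (W (m + 1 - l mod m))"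
    then have "W (m + 1 - k mod m) = W (m + 1 - l mod m)"
      by (metis swap_swap)
    then have "W ((m + 1 - k) mod m) = W ((m + 1 - l) mod m)"
      using kl by (simp add: W_mod)
    then have "(m + 1 - k) mod m = (m + 1 - l) mod m"
      using inj_on_W assms by (auto dest: inj_onD)
    then show "k = l"
      using kl by (intro diff_mod_inj[of k m l "m + 1"]) auto
  qed
  fix p k
  assume p: "p \<in> prod.swap ` P" "p \<noteq> prod.swap (W (m + 1 - k mod m))"
    "p \<noteq> prod.swap (W (m + 1 - Suc k mod m))"
  define j where "j = m - k mod m"
  have Suc_j: "m + 1 - k mod m = Suc j"
    using assms unfolding j_def by (simp add: Suc_diff_le less_imp_le)
  have j: "W (m + 1 - Suc k mod m) = W j"
    using W_mirror_Suc[OF assms] unfolding j_def .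
  obtain p' where p': "p' \<in> P" "p = prod.swap p'" "p' \<noteq> W j" "p' \<noteq> W (Suc j)"
    using p unfolding Suc_j j by blast
  have "orient (prod.swap (W (Suc j))) (prod.swap (W j)) p = orient (W j) (W (Suc j)) p'"
    using orient_prod_swap[of "W (Suc j)" "W j" p'] orient_perms(4)[of "W (Suc j)" "W j"] p'(2)
    by simp
  also have "\<dots> < 0"
    using p' by (intro edge_orient)
  finally show "orient (prod.swap (W (m + 1 - k mod m))) (prod.swap (W (m + 1 - Suc k mod m))) p < 0"
    unfolding Suc_j j .
qed

end

section \<open>The configuration around a good triangle\<close>

lemma doubleton_with_member: "a \<in> A \<or> b \<in> A \<Longrightarrow> \<exists>c\<in>A. \<exists>d. {c, d} = {a, b}"
  by (metis insert_commute)

text \<open>The good triangle is \<open>x W\<^sub>0 W\<^sub>1\<close>: the hull enumeration is rotated so that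
  \<open>i = 0\<close>, and extended periodically, so \<open>W (m - 1)\<close> and \<open>W (m - 2)\<close> stand for \<open>v\<^sub>i\<^sub>-\<^sub>1\<close>
  and \<open>v\<^sub>i\<^sub>-\<^sub>2\<close>.\<close>
locale good_triangle_config = clockwise_polygon +
  fixes x :: pt
  assumes orient_neq_0: "\<lbrakk>a \<in> P; b \<in> P; c \<in> P; a \<noteq> b; a \<noteq> c; b \<noteq> c\<rbrakk> \<Longrightarrow> orient a b c \<noteq> 0"
    and m_ge_6: "6 \<le> m"
    and x_in_P: "x \<in> P"
    and x_neq_W: "x \<noteq> W k"
    and x_in_quadrilateral: "x \<in> convex hull {W 0, W 1, W 2, W (m - 1)}"
    and good: "\<lbrakk>p \<in> P; q \<in> P; p \<noteq> q; {p, q} \<notin> {{x, W 0}, {x, W 1}, {W 0, W 1}};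
      closed_segment p q \<inter> closed_segment x (W 0) \<noteq> {};
      closed_segment p q \<inter> closed_segment x (W 1) \<noteq> {};
      closed_segment p q \<inter> closed_segment (W 0) (W 1) \<noteq> {}\<rbrakk>
      \<Longrightarrow> {p, q} \<in> {{W 0, W 2}, {W 0, W 3}, {W 1, W (m - 2)}, {W 1, W (m - 1)}}"
begin

lemma W_distinct:
  "W 0 \<noteq> W 1" "W 0 \<noteq> W 2" "W 0 \<noteq> W 3" "W 0 \<noteq> W (m - 2)" "W 0 \<noteq> W (m - 1)"
  "W 1 \<noteq> W 2" "W 1 \<noteq> W 3" "W 1 \<noteq> W (m - 2)" "W 1 \<noteq> W (m - 1)"
  "W 2 \<noteq> W 3" "W 2 \<noteq> W (m - 2)" "W 2 \<noteq> W (m - 1)"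
  "W 3 \<noteq> W (m - 2)" "W 3 \<noteq> W (m - 1)" "W (m - 2) \<noteq> W (m - 1)"
  using m_ge_6 by (intro W_neq; simp)+

text \<open>\<open>simplified\<close> writes \<open>1\<close> as \<open>Suc 0\<close>, the simp normal form, so that the rules fire.\<close>
lemmas points_distinct [simp] =
  W_distinct[simplified] W_distinct[symmetric, simplified] x_neq_W x_neq_W[symmetric]

lemma W_m [simp]: "W m = W 0"
  using W_add_m[of 0] by simp

lemma orient_Wm2_Wm1: "p \<in> P \<Longrightarrow> p \<noteq> W (m - 2) \<Longrightarrow> p \<noteq> W (m - 1) \<Longrightarrow> orient (W (m - 2)) (W (m - 1)) p < 0"
  using edge_orient[of p "m - 2"] m_ge_6 by (simp add: Suc_diff_Suc numeral_2_eq_2)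

lemma orient_Wm1_W0: "p \<in> P \<Longrightarrow> p \<noteq> W (m - 1) \<Longrightarrow> p \<noteq> W 0 \<Longrightarrow> orient (W (m - 1)) (W 0) p < 0"
  using edge_orient[of p "m - 1"] m_ge_6 by simp

lemma orient_W0_W1: "p \<in> P \<Longrightarrow> p \<noteq> W 0 \<Longrightarrow> p \<noteq> W 1 \<Longrightarrow> orient (W 0) (W 1) p < 0"
  using edge_orient[of p 0] by simp

lemma orient_W1_W2: "p \<in> P \<Longrightarrow> p \<noteq> W 1 \<Longrightarrow> p \<noteq> W 2 \<Longrightarrow> orient (W 1) (W 2) p < 0"
  using edge_orient[of p 1] by (simp add: numeral_2_eq_2)

lemma orient_W2_W3: "p \<in> P \<Longrightarrow> p \<noteq> W 2 \<Longrightarrow> p \<noteq> W 3 \<Longrightarrow> orient (W 2) (W 3) p < 0"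
  using edge_orient[of p 2] by (simp add: numeral_3_eq_3 numeral_2_eq_2)

text \<open>Otherwise the diagonal \<open>W 0 W (m - 2)\<close> would meet all three sides of the good triangle.\<close>
lemma orient_W0_Wm2_x: "0 < orient (W 0) (W (m - 2)) x"
proof (rule ccontr)
  assume "\<not> 0 < orient (W 0) (W (m - 2)) x"
  then have neg: "orient (W 0) (W (m - 2)) x < 0"
    using orient_neq_0[of "W 0" "W (m - 2)" x] W_in_P x_in_P by fastforce
  have "orient (W 1) (W (m - 2)) x < 0"
  proof -
    have "orient (W (m - 2)) x (W 0) < 0"
      using neg orient_perms(1)[of "W 0" "W (m - 2)" x] by simp
    moreover have "orient (W 1) (W (m - 2)) (W (m - 1)) < 0" "orient (W 1) (W (m - 2)) (W 0) < 0"
      using orient_W(1)[of 1 "m - 2" "m - 1"] orient_W(2)[of 0 1 "m - 2"] m_ge_6 by simp_all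
    moreover have "orient (W (m - 2)) (W (m - 1)) x < 0"
      using orient_Wm2_Wm1 x_in_P by simp
    ultimately have "0 < orient (W (m - 2)) (W (m - 1)) (W 0) * orient (W 1) (W (m - 2)) x"
      unfolding orient_barycentric[of "W (m - 2)" "W (m - 1)" "W 0" "W 1" "W (m - 2)" x]
      by (simp add: add_pos_pos mult_neg_neg)
    moreover have "orient (W (m - 2)) (W (m - 1)) (W 0) < 0"
      using orient_W(2)[of 0 "m - 2" "m - 1"] m_ge_6 by simp
    ultimately show ?thesis
      by (simp add: zero_less_mult_iff)
  qed
  then have "closed_segment (W 0) (W (m - 2)) \<inter> closed_segment x (W 1) \<noteq> {}"
    using neg orient_W(4)[of 0 1 "m - 2"] m_ge_6 orient_W0_W1[of x] x_in_P
      orient_perms[of x "W 1" "W 0"] orient_perms(1)[of x "W 1" "W (m - 2)"]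
    by (intro closed_segments_intersect_if_crossing) (simp_all add: mult_neg_pos mult_neg_neg)
  then have "{W 0, W (m - 2)} \<in> {{W 0, W 2}, {W 0, W 3}, {W 1, W (m - 2)}, {W 1, W (m - 1)}}"
    using W_in_P by (intro good) (auto simp: doubleton_eq_iff)
  then show False
    using m_ge_6 by (auto simp: doubleton_eq_iff)
qed

lemma orient_chord_x:
  assumes "k \<in> {m - 2, m - 1}" "j \<in> {2, 3}"
  shows "0 < orient (W k) (W j) x"
proof -
  have "0 \<le> orient (W k) (W j) y" if "y \<in> {W 0, W 1, W 2, W (m - 1)}" for y
    using that assms orient_W(6)[of 0 j k] orient_W(6)[of 1 j k] orient_W(6)[of 2 3 k]
      orient_W(5)[of j "m - 2" "m - 1"] m_ge_6 by (auto simp: le_less)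
  then have "0 \<le> orient (W k) (W j) x"
    using x_in_quadrilateral by (rule orient_nonneg_convex_hull[rotated])
  moreover have "orient (W k) (W j) x \<noteq> 0"
    using assms W_in_P x_in_P m_ge_6 by (intro orient_neq_0) auto
  ultimately show ?thesis
    by simp
qed

lemma chord_disjoint_xW1:
  assumes "k \<in> {m - 2, m - 1}" "j \<in> {2, 3}"
  shows "closed_segment (W j) (W k) \<inter> closed_segment x (W 1) = {}"
proof -
  have "0 < orient (W k) (W j) (W 1)"
    using assms orient_W(6)[of 1 j k] m_ge_6 by auto
  then show ?thesis
    using closed_segments_disjoint_if_separated[of "W k" "W j" x "W 1" "W j" "W k"]
      orient_chord_x[OF assms] by auto
qed

lemma W0_segment_disjoint_xW1:
  assumes "p \<in> P" "p \<notin> {W 0, W 1, W 2, W 3, x}"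
  shows "closed_segment (W 0) p \<inter> closed_segment x (W 1) = {}"
proof (rule ccontr)
  assume "closed_segment (W 0) p \<inter> closed_segment x (W 1) \<noteq> {}"
  then have "{W 0, p} \<in> {{W 0, W 2}, {W 0, W 3}, {W 1, W (m - 2)}, {W 1, W (m - 1)}}"
    using assms W_in_P by (intro good) (auto simp: doubleton_eq_iff)
  then show False
    using assms by (auto simp: doubleton_eq_iff)
qed

lemma W1_segment_disjoint_xW0:
  assumes "q \<in> P" "q \<notin> {W 0, W 1, W (m - 2), W (m - 1), x}"
  shows "closed_segment (W 1) q \<inter> closed_segment x (W 0) = {}"
proof (rule ccontr)
  assume "closed_segment (W 1) q \<inter> closed_segment x (W 0) \<noteq> {}"
  then have "{W 1, q} \<in> {{W 0, W 2}, {W 0, W 3}, {W 1, W (m - 2)}, {W 1, W (m - 1)}}"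
    using assms W_in_P by (intro good) (auto simp: doubleton_eq_iff)
  then show False
    using assms by (auto simp: doubleton_eq_iff)
qed

lemma orient_W1_x_pos_if_beyond_W0_Wm2:
  assumes q: "q \<in> P" "q \<notin> {W 0, W 1, W (m - 2), W (m - 1), x}"
    and beyond: "orient (W 0) (W (m - 2)) q < 0"
  shows "0 < orient (W 1) x q"
proof (rule ccontr)
  assume "\<not> 0 < orient (W 1) x q"
  then have right: "orient (W 1) x q < 0"
    using orient_neq_0[of "W 1" x q] q W_in_P x_in_P by fastforce
  have x_W0_W1: "orient x (W 0) (W 1) < 0"
    using orient_W0_W1[of x] x_in_P orient_perms(1)[of x "W 0" "W 1"] by simp
  have "0 < orient x (W 0) q"
  proof (rule ccontr)
    assume "\<not> 0 < orient x (W 0) q"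
    then have "orient x (W 0) q < 0"
      using orient_neq_0[of x "W 0" q] q W_in_P x_in_P by fastforce
    moreover have "orient q (W 0) (W 1) < 0"
      using orient_W0_W1[of q] q orient_perms(1)[of q "W 0" "W 1"] by simp
    moreover have "0 < orient (W 0) (W (m - 2)) (W 1)"
      using orient_W(4)[of 0 1 "m - 2"] m_ge_6 by simp
    ultimately have "orient x (W 0) (W 1) * orient (W 0) (W (m - 2)) q < 0"
      unfolding orient_barycentric[of x "W 0" "W 1" "W 0" "W (m - 2)" q]
      using orient_W0_Wm2_x by (simp add: add_neg_neg mult_neg_pos)
    then show False
      using x_W0_W1 beyond by (simp add: mult_less_0_iff)
  qed
  moreover have "0 < orient (W 1) q x"
    using right orient_perms(3)[of "W 1" q x] by linarith
  moreover have "orient (W 1) q (W 0) < 0"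
    using orient_W0_W1[of q] q orient_perms(2)[of "W 1" q "W 0"] by simp
  ultimately have "closed_segment (W 1) q \<inter> closed_segment x (W 0) \<noteq> {}"
    using x_W0_W1
    by (intro closed_segments_intersect_if_crossing) (simp_all add: mult_pos_neg mult_neg_pos)
  then show False
    using W1_segment_disjoint_xW0 q by blast
qed

lemma orient_W0_Wm2_pos_if_W1_x_separates_W3:
  assumes q: "q \<in> P" "q \<notin> {W 1, W 2, W 3}"
    and "0 < orient (W 1) x q" "orient (W 1) x (W 3) < 0"
  shows "0 < orient (W 0) (W (m - 2)) q"
proof -
  have W123: "orient (W 1) (W 2) (W 3) < 0"
    using orient_W(1)[of 1 2 3] m_ge_6 by simp
  have "orient (W 1) q x < 0"
    using assms(3) orient_perms(3)[of "W 1" q x] by linarith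
  then have "0 < orient (W 1) q x * orient (W 1) (W 2) (W 3) + orient (W 1) x (W 3) * orient (W 1) (W 2) q"
    using assms W123 orient_W1_W2[of q] by (simp add: add_pos_pos mult_neg_neg)
  then have "0 < orient (W 1) q (W 3) * orient (W 1) (W 2) x"
    using orient_grassmann_pluecker[of "W 1" q "W 3" "W 2" x] by simp
  then have q3: "orient (W 1) q (W 3) < 0"
    using orient_W1_W2[of x] x_in_P by (simp add: zero_less_mult_iff)
  have "orient q (W 2) (W 3) < 0"
    using orient_W2_W3[of q] q orient_perms(1)[of q "W 2" "W 3"] by simp
  moreover have "0 < orient (W 0) (W (m - 2)) (W k)" if "k \<in> {1, 2, 3}" for k
    using orient_W(4)[of 0 k "m - 2"] that m_ge_6 by auto
  ultimately have "orient (W 1) (W 2) (W 3) * orient (W 0) (W (m - 2)) q < 0"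
    unfolding orient_barycentric[of "W 1" "W 2" "W 3" "W 0" "W (m - 2)" q]
    using q3 orient_W1_W2[of q] q by (simp add: add_neg_neg mult_neg_pos)
  then show ?thesis
    using W123 by (simp add: mult_less_0_iff)
qed

lemma Wj_segment_meeting_xW1_disjoint_W0_Wm2_generic:
  assumes j: "j \<in> {2, 3}"
    and q: "q \<in> P" "q \<notin> {W 0, W 1, W 2, W 3, W (m - 2), W (m - 1), x}"
    and meets: "closed_segment (W j) q \<inter> closed_segment x (W 1) \<noteq> {}"
  shows "closed_segment (W j) q \<inter> closed_segment (W 0) (W (m - 2)) = {}"
proof (rule ccontr)
  assume meets': "closed_segment (W j) q \<inter> closed_segment (W 0) (W (m - 2)) \<noteq> {}"
  have "0 < orient (W 0) (W (m - 2)) (W j)"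
    using orient_W(4)[of 0 j "m - 2"] j m_ge_6 by auto
  then have beyond: "orient (W 0) (W (m - 2)) q < 0"
    using meets' closed_segments_disjoint_if_separated[of "W 0" "W (m - 2)" "W j" q "W 0" "W (m - 2)"]
      orient_neq_0[of "W 0" "W (m - 2)" q] q W_in_P by force
  then have "0 < orient (W 1) x q"
    using q by (intro orient_W1_x_pos_if_beyond_W0_Wm2) auto
  then have "orient x (W 1) q < 0"
    using orient_perms(4)[of x "W 1" q] by linarith
  moreover have "orient x (W 1) (W j) * orient x (W 1) q < 0"
    using meets j q W_in_P x_in_P
    by (intro orient_mult_neg_if_segments_meet orient_neq_0) (auto simp: Int_commute)
  ultimately have "0 < orient x (W 1) (W j)"
    by (simp add: mult_less_0_iff)
  then have Wj_right: "orient (W 1) x (W j) < 0"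
    using orient_perms(4)[of x "W 1" "W j"] by linarith
  show False
  proof (cases "j = 2")
    case True
    then show False
      using Wj_right orient_W1_W2[of x] x_in_P orient_perms(3)[of "W 1" x "W 2"] by simp
  next
    case False
    then have "0 < orient (W 0) (W (m - 2)) q"
      using j q Wj_right \<open>0 < orient (W 1) x q\<close> by (intro orient_W0_Wm2_pos_if_W1_x_separates_W3) auto
    then show False
      using beyond by simp
  qed
qed

lemma W2_W3_disjoint_xW1: "closed_segment x (W 1) \<inter> closed_segment (W 2) (W 3) = {}"
  using orient_W2_W3[of x] orient_W2_W3[of "W 1"] x_in_P W_in_P
  by (intro closed_segment_disjoint_if_right) auto

lemma W0_Wm2_disjoint_W1_Wj:
  assumes "j \<in> {2, 3}"
  shows "closed_segment (W 0) (W (m - 2)) \<inter> closed_segment (W 1) (W j) = {}"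
proof (cases "j = 2")
  case True
  then show ?thesis
    using closed_segment_disjoint_if_right[of "W 1" "W 2" "W 0" "W (m - 2)"]
      orient_W1_W2[of "W 0"] orient_W1_W2[of "W (m - 2)"] W_in_P by simp
next
  case False
  then have "j = 3"
    using assms by simp
  then show ?thesis
    using orient_W(2)[of 0 1 3] orient_W(1)[of 1 3 "m - 2"] m_ge_6
      closed_segments_disjoint_if_separated'[of "W 1" "W 3" "W 0" "W (m - 2)" "W 1" "W 3"] by simp
qed

lemma Wj_segment_meeting_xW1_disjoint_W0_Wm2:
  assumes j: "j \<in> {2, 3}" and q: "q \<in> P" "q \<notin> {W 0, W j}"
    and meets: "closed_segment (W j) q \<inter> closed_segment x (W 1) \<noteq> {}"
  shows "closed_segment (W j) q \<inter> closed_segment (W 0) (W (m - 2)) = {}"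
proof -
  have Wj_pos: "0 < orient (W 0) (W (m - 2)) (W j)"
    using orient_W(4)[of 0 j "m - 2"] j m_ge_6 by auto
  consider "q \<in> {W (m - 2), W (m - 1)}" | "q \<in> {W 2, W 3}" | "q = W 1" | "q = x"
    | "q \<notin> {W 0, W 1, W 2, W 3, W (m - 2), W (m - 1), x}"
    using q by blast
  then show ?thesis
  proof cases
    case 1
    then show ?thesis
      using meets chord_disjoint_xW1[OF _ j, of "m - 2"] chord_disjoint_xW1[OF _ j, of "m - 1"] by auto
  next
    case 2
    then have W23: "closed_segment (W j) q = closed_segment (W 2) (W 3)"
      using j q by auto
    show ?thesis
      using meets W2_W3_disjoint_xW1 unfolding W23 by blast
  next
    case 3
    then show ?thesis
      using W0_Wm2_disjoint_W1_Wj[OF j] by (auto simp: closed_segment_commute)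
  next
    case 4
    then show ?thesis
      using Wj_pos orient_W0_Wm2_x
        closed_segments_disjoint_if_separated[of "W 0" "W (m - 2)" "W j" x "W 0" "W (m - 2)"] by simp
  next
    case 5
    then show ?thesis
      using j q meets by (intro Wj_segment_meeting_xW1_disjoint_W0_Wm2_generic)
  qed
qed

definition removed_segs :: "pt set set" where
  "removed_segs = {closed_segment x (W 0), closed_segment x (W 1), closed_segment (W 0) (W 1),
     closed_segment (W 0) (W 2), closed_segment (W 0) (W 3), closed_segment (W 1) (W (m - 2)),
     closed_segment (W 1) (W (m - 1)), closed_segment (W 2) (W 3),
     closed_segment (W (m - 2)) (W (m - 1))}"

lemma removed_segs_members:
  "closed_segment x (W 1) \<in> removed_segs" "closed_segment (W 0) (W 1) \<in> removed_segs"
  "closed_segment (W 2) (W 3) \<in> removed_segs" "closed_segment (W (m - 2)) (W (m - 1)) \<in> removed_segs"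
  unfolding removed_segs_def by simp_all

lemma W0_Wj_segments_common_disjoint:
  assumes j: "j \<in> {2, 3}" and p: "p \<in> P" "p \<notin> {W 0, W 1, W 2, W 3, x}"
    and q: "q \<in> P" "q \<notin> {W 0, W j}"
    and meets: "closed_segment (W j) q \<inter> closed_segment x (W 1) \<noteq> {}"
    and st: "closed_segment (W 0) p \<inter> closed_segment (W j) q \<noteq> {}"
  shows "\<exists>r\<in>removed_segs. r \<inter> closed_segment (W 0) p = {} \<and> r \<inter> closed_segment (W j) q = {}"
proof -
  have q': "q \<notin> {W (m - 2), W (m - 1)}"
    using meets chord_disjoint_xW1[OF _ j, of "m - 2"] chord_disjoint_xW1[OF _ j, of "m - 1"] by auto
  have "p \<noteq> W (m - 1)"
  proof
    assume "p = W (m - 1)"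
    moreover have "closed_segment (W j) q \<inter> closed_segment (W (m - 1)) (W 0) = {}"
      using orient_Wm1_W0[of "W j"] orient_Wm1_W0[of q] j q q' W_in_P
      by (intro closed_segment_disjoint_if_right) auto
    ultimately show False
      using st by (auto simp: closed_segment_commute)
  qed
  moreover have "p \<noteq> W (m - 2)"
    using st Wj_segment_meeting_xW1_disjoint_W0_Wm2[OF j q meets] by auto
  ultimately have "closed_segment (W 0) p \<inter> closed_segment (W (m - 2)) (W (m - 1)) = {}"
    "closed_segment (W j) q \<inter> closed_segment (W (m - 2)) (W (m - 1)) = {}"
    using orient_Wm2_Wm1[of "W 0"] orient_Wm2_Wm1[of p] orient_Wm2_Wm1[of "W j"]
      orient_Wm2_Wm1[of q] j p q q' W_in_P
    by (auto intro!: closed_segment_disjoint_if_right)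
  then show ?thesis
    using removed_segs_members(4) by (auto simp: Int_commute)
qed

lemma segment_from_W2_or_W3:
  assumes "q1 \<in> P" "q2 \<in> P" "q1 \<noteq> q2" "q1 \<in> {W 2, W 3} \<or> q2 \<in> {W 2, W 3}"
    and "closed_segment q1 q2 \<notin> removed_segs"
  obtains j q where "j \<in> {2, 3}" "closed_segment q1 q2 = closed_segment (W j) q" "q \<in> P" "q \<notin> {W 0, W j}"
proof -
  obtain c q where "c \<in> {W 2, W 3}" and "{c, q} = {q1, q2}"
    using doubleton_with_member[OF assms(4)] by blast
  then obtain j where j: "j \<in> {2, 3}" and "{W j, q} = {q1, q2}"
    by blast
  then have t: "closed_segment q1 q2 = closed_segment (W j) q" and "q \<in> P" "q \<noteq> W j"
    using assms(1-3) by (auto simp: doubleton_eq_iff)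
  moreover have "q \<noteq> W 0"
  proof
    assume "q = W 0"
    then have "closed_segment q1 q2 \<in> {closed_segment (W 0) (W 2), closed_segment (W 0) (W 3)}"
      using j unfolding t by (auto simp: closed_segment_commute)
    then show False
      using assms(5) unfolding removed_segs_def by blast
  qed
  ultimately show thesis
    using that j by blast
qed

lemma W0_segment_common_disjoint:
  assumes p: "p \<in> P" "p \<noteq> W 0" and q: "q1 \<in> P" "q2 \<in> P" "q1 \<noteq> q2"
    and not_removed: "closed_segment (W 0) p \<notin> removed_segs" "closed_segment q1 q2 \<notin> removed_segs"
    and st: "closed_segment (W 0) p \<inter> closed_segment q1 q2 \<noteq> {}"
  shows "\<exists>r\<in>removed_segs. r \<inter> closed_segment (W 0) p = {} \<and> r \<inter> closed_segment q1 q2 = {}"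
proof -
  have "closed_segment (W 0) p \<notin> {closed_segment (W 0) (W k) | k. k \<in> {1, 2, 3}} \<union> {closed_segment x (W 0)}"
    using not_removed(1) unfolding removed_segs_def by blast
  then have p': "p \<notin> {W 0, W 1, W 2, W 3, x}"
    using p(2) by (auto simp: closed_segment_commute)
  then have s_xW1: "closed_segment (W 0) p \<inter> closed_segment x (W 1) = {}"
    using W0_segment_disjoint_xW1 p by blast
  show ?thesis
  proof (cases "closed_segment q1 q2 \<inter> closed_segment x (W 1) = {}")
    case True
    then show ?thesis
      using s_xW1 removed_segs_members(1) by (auto simp: Int_commute)
  next
    case meets: False
    show ?thesis
    proof (cases "q1 \<in> {W 2, W 3} \<or> q2 \<in> {W 2, W 3}")
      case False
      then have "closed_segment (W 0) p \<inter> closed_segment (W 2) (W 3) = {}"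
        "closed_segment q1 q2 \<inter> closed_segment (W 2) (W 3) = {}"
        using orient_W2_W3[of "W 0"] orient_W2_W3[of p] orient_W2_W3[of q1] orient_W2_W3[of q2]
          p p' q W_in_P
        by (auto intro!: closed_segment_disjoint_if_right)
      then show ?thesis
        using removed_segs_members(3) by (auto simp: Int_commute)
    next
      case True
      then obtain j q where j: "j \<in> {2, 3}" and t: "closed_segment q1 q2 = closed_segment (W j) q"
        and q': "q \<in> P" "q \<notin> {W 0, W j}"
        using segment_from_W2_or_W3[OF q True not_removed(2)] by blast
      then show ?thesis
        using W0_Wj_segments_common_disjoint[OF j p(1) p' q'] meets st unfolding t by blast
    qed
  qed
qed

lemma mirror_W:
  "W (m + 1 - 0 mod m) = W 1" "W (m + 1 - 1 mod m) = W 0" "W (m + 1 - 2 mod m) = W (m - 1)"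
  "W (m + 1 - 3 mod m) = W (m - 2)" "W (m + 1 - (m - 2) mod m) = W 3" "W (m + 1 - (m - 1) mod m) = W 2"
proof -
  have "m + 1 - 2 mod m = m - 1" "m + 1 - 3 mod m = m - 2" "m + 1 - (m - 2) mod m = 3"
    "m + 1 - (m - 1) mod m = 2"
    using m_ge_6 by simp_all
  then show "W (m + 1 - 0 mod m) = W 1" "W (m + 1 - 1 mod m) = W 0" "W (m + 1 - 2 mod m) = W (m - 1)"
    "W (m + 1 - 3 mod m) = W (m - 2)" "W (m + 1 - (m - 2) mod m) = W 3" "W (m + 1 - (m - 1) mod m) = W 2"
    using m_ge_6 W_add_m[of 1] by simp_all
qed

lemma good_triangle_config_mirror:
  "good_triangle_config (prod.swap ` P) m (\<lambda>k. prod.swap (W (m + 1 - k mod m))) (prod.swap x)"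
proof (intro good_triangle_config.intro good_triangle_config_axioms.intro)
  show "clockwise_polygon (prod.swap ` P) m (\<lambda>k. prod.swap (W (m + 1 - k mod m)))"
    using clockwise_polygon_mirror m_ge_6 by simp
  show "orient a b c \<noteq> 0" if "a \<in> prod.swap ` P" "b \<in> prod.swap ` P" "c \<in> prod.swap ` P"
    "a \<noteq> b" "a \<noteq> c" "b \<noteq> c" for a b c
    using orient_neq_0_prod_swap_image[of P, OF orient_neq_0] that by blast
  show "6 \<le> m"
    by (rule m_ge_6)
  show "prod.swap x \<in> prod.swap ` P" "prod.swap x \<noteq> prod.swap (W (m + 1 - k mod m))" for k
    using x_in_P by simp_all
  have "prod.swap x \<in> prod.swap ` (convex hull {W 1, W 0, W (m - 1), W 2})"
    using x_in_quadrilateral by (simp add: insert_commute)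
  then show "prod.swap x \<in> convex hull {prod.swap (W (m + 1 - 0 mod m)), prod.swap (W (m + 1 - 1 mod m)),
      prod.swap (W (m + 1 - 2 mod m)), prod.swap (W (m + 1 - (m - 1) mod m))}"
    unfolding mirror_W by (simp add: convex_hull_linear_image[OF linear_prod_swap])
next
  fix p q
  assume "p \<in> prod.swap ` P" "q \<in> prod.swap ` P" "p \<noteq> q"
  then obtain p' q' where pq: "p' \<in> P" "q' \<in> P" "p' \<noteq> q'" "p = prod.swap p'" "q = prod.swap q'"
    by blast
  assume "{p, q} \<notin> {{prod.swap x, prod.swap (W (m + 1 - 0 mod m))},
      {prod.swap x, prod.swap (W (m + 1 - 1 mod m))},
      {prod.swap (W (m + 1 - 0 mod m)), prod.swap (W (m + 1 - 1 mod m))}}"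
  then have "{p', q'} \<notin> {{x, W 0}, {x, W 1}, {W 0, W 1}}"
    unfolding mirror_W pq(4,5) by (simp add: prod_swap_doubleton_eq_iff insert_commute)
  moreover assume "closed_segment p q \<inter> closed_segment (prod.swap x) (prod.swap (W (m + 1 - 0 mod m))) \<noteq> {}"
    and "closed_segment p q \<inter> closed_segment (prod.swap x) (prod.swap (W (m + 1 - 1 mod m))) \<noteq> {}"
    and "closed_segment p q \<inter>
      closed_segment (prod.swap (W (m + 1 - 0 mod m))) (prod.swap (W (m + 1 - 1 mod m))) \<noteq> {}"
  then have "closed_segment p' q' \<inter> closed_segment x (W 1) \<noteq> {}"
    "closed_segment p' q' \<inter> closed_segment x (W 0) \<noteq> {}"
    "closed_segment p' q' \<inter> closed_segment (W 0) (W 1) \<noteq> {}"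
    unfolding mirror_W pq(4,5) by (simp_all add: closed_segment_prod_swap closed_segment_commute)
  ultimately have "{p', q'} \<in> {{W 0, W 2}, {W 0, W 3}, {W 1, W (m - 2)}, {W 1, W (m - 1)}}"
    using pq(1-3) by (intro good)
  then show "{p, q} \<in> {{prod.swap (W (m + 1 - 0 mod m)), prod.swap (W (m + 1 - 2 mod m))},
      {prod.swap (W (m + 1 - 0 mod m)), prod.swap (W (m + 1 - 3 mod m))},
      {prod.swap (W (m + 1 - 1 mod m)), prod.swap (W (m + 1 - (m - 2) mod m))},
      {prod.swap (W (m + 1 - 1 mod m)), prod.swap (W (m + 1 - (m - 1) mod m))}}"
    unfolding mirror_W pq(4,5) by (simp add: prod_swap_doubleton_eq_iff insert_commute)
qed

lemma removed_segs_mirror: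
  "good_triangle_config.removed_segs m (\<lambda>k. prod.swap (W (m + 1 - k mod m))) (prod.swap x)
     = (\<lambda>s. prod.swap ` s) ` removed_segs"
  unfolding good_triangle_config.removed_segs_def[OF good_triangle_config_mirror] removed_segs_def
    mirror_W closed_segment_prod_swap
  by (simp add: insert_commute closed_segment_commute)

text \<open>The mirrored configuration exchanges \<open>W 0\<close> and \<open>W 1\<close>.\<close>
lemma W1_segment_common_disjoint:
  assumes p: "p \<in> P" "p \<noteq> W 1" and q: "q1 \<in> P" "q2 \<in> P" "q1 \<noteq> q2"
    and not_removed: "closed_segment (W 1) p \<notin> removed_segs" "closed_segment q1 q2 \<notin> removed_segs"
    and st: "closed_segment (W 1) p \<inter> closed_segment q1 q2 \<noteq> {}"
  shows "\<exists>r\<in>removed_segs. r \<inter> closed_segment (W 1) p = {} \<and> r \<inter> closed_segment q1 q2 = {}"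
proof -
  interpret mirror: good_triangle_config "prod.swap ` P" m "\<lambda>k. prod.swap (W (m + 1 - k mod m))"
    "prod.swap x"
    by (rule good_triangle_config_mirror)
  have inj: "inj (\<lambda>s. prod.swap ` s)"
    by (rule injI) simp
  have "\<exists>r\<in>(\<lambda>s. prod.swap ` s) ` removed_segs.
      r \<inter> prod.swap ` closed_segment (W 1) p = {} \<and> r \<inter> prod.swap ` closed_segment q1 q2 = {}"
    using mirror.W0_segment_common_disjoint[of "prod.swap p" "prod.swap q1" "prod.swap q2",
        unfolded removed_segs_mirror mirror_W closed_segment_prod_swap]
      p q not_removed st
    by (simp add: inj_image_mem_iff[OF inj])
  then show ?thesis
    by auto
qed

lemma W01_segment_common_disjoint:
  assumes "a \<in> {W 0, W 1}" "p \<in> P" "p \<noteq> a" "q1 \<in> P" "q2 \<in> P" "q1 \<noteq> q2"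
    "closed_segment a p \<notin> removed_segs" "closed_segment q1 q2 \<notin> removed_segs"
    "closed_segment a p \<inter> closed_segment q1 q2 \<noteq> {}"
  shows "\<exists>r\<in>removed_segs. r \<inter> closed_segment a p = {} \<and> r \<inter> closed_segment q1 q2 = {}"
  using assms W0_segment_common_disjoint[of p q1 q2] W1_segment_common_disjoint[of p q1 q2] by blast

lemma removed_segs_common_disjoint:
  assumes s: "s \<in> segs P" "s \<notin> removed_segs" and t: "t \<in> segs P" "t \<notin> removed_segs"
    and "s \<inter> t \<noteq> {}"
  shows "\<exists>r\<in>removed_segs. r \<inter> s = {} \<and> r \<inter> t = {}"
proof -
  obtain p1 p2 where p: "s = closed_segment p1 p2" "p1 \<in> P" "p2 \<in> P" "p1 \<noteq> p2"
    using s unfolding segs_def by blast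
  obtain q1 q2 where q: "t = closed_segment q1 q2" "q1 \<in> P" "q2 \<in> P" "q1 \<noteq> q2"
    using t unfolding segs_def by blast
  consider "p1 \<in> {W 0, W 1}" | "p2 \<in> {W 0, W 1}" | "q1 \<in> {W 0, W 1}" | "q2 \<in> {W 0, W 1}"
    | "{p1, p2, q1, q2} \<inter> {W 0, W 1} = {}"
    by blast
  then show ?thesis
  proof cases
    case 1
    then show ?thesis
      using W01_segment_common_disjoint[of p1 p2 q1 q2] p q assms by simp
  next
    case 2
    then show ?thesis
      using W01_segment_common_disjoint[of p2 p1 q1 q2] p q assms by (simp add: closed_segment_commute)
  next
    case 3
    then show ?thesis
      using W01_segment_common_disjoint[of q1 q2 p1 p2] p q assms by (auto simp: Int_commute)
  next
    case 4
    then show ?thesis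
      using W01_segment_common_disjoint[of q2 q1 p1 p2] p q assms
      by (auto simp: Int_commute closed_segment_commute)
  next
    case 5
    then have "closed_segment p1 p2 \<inter> closed_segment (W 0) (W 1) = {}"
      "closed_segment q1 q2 \<inter> closed_segment (W 0) (W 1) = {}"
      using orient_W0_W1[of p1] orient_W0_W1[of p2] orient_W0_W1[of q1] orient_W0_W1[of q2] p q
      by (auto intro!: closed_segment_disjoint_if_right)
    then show ?thesis
      using removed_segs_members(2) p(1) q(1) by (auto simp: Int_commute)
  qed
qed

lemma removed_segs_subset: "removed_segs \<subseteq> segs P"
  unfolding removed_segs_def
  by (intro insert_subsetI empty_subsetI closed_segment_in_segs) (simp_all add: W_in_P x_in_P)

lemma card_removed_segs: "card removed_segs \<le> 9"
proof -
  define L where "L = [closed_segment x (W 0), closed_segment x (W 1), closed_segment (W 0) (W 1),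
     closed_segment (W 0) (W 2), closed_segment (W 0) (W 3), closed_segment (W 1) (W (m - 2)),
     closed_segment (W 1) (W (m - 1)), closed_segment (W 2) (W 3),
     closed_segment (W (m - 2)) (W (m - 1))]"
  have "removed_segs = set L" "length L = 9"
    unfolding L_def removed_segs_def by simp_all
  then show ?thesis
    using card_length[of L] by simp
qed

lemma mv_set_segs_minus_removed: "mv_set (segs P) D_adj (segs P - removed_segs)"
  unfolding mv_set_def
proof (intro conjI ballI impI)
  fix s t
  assume s: "s \<in> segs P - removed_segs" and t: "t \<in> segs P - removed_segs" and "s \<noteq> t"
  show "mutually_visible (segs P) D_adj (segs P - removed_segs) s t"
  proof (cases "D_adj s t")
    case True
    then show ?thesis
      using s t \<open>s \<noteq> t\<close> by (intro mutually_visible_if_adjacent) auto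
  next
    case False
    then obtain r where "r \<in> removed_segs" "r \<inter> s = {}" "r \<inter> t = {}"
      using removed_segs_common_disjoint s t unfolding D_adj_def by blast
    then show ?thesis
      using s t \<open>s \<noteq> t\<close> False removed_segs_subset unfolding D_adj_def
      by (intro mutually_visible_if_common_neighbour[of _ _ _ r]) auto
  qed
qed auto

lemma card_segs_minus_9_le_mu:
  assumes "finite P"
  shows "card (segs P) - 9 \<le> mu (segs P) D_adj"
proof -
  have "card (segs P) - 9 \<le> card (segs P) - card removed_segs"
    using card_removed_segs by linarith
  also have "\<dots> \<le> card (segs P - removed_segs)"
    by (rule diff_card_le_card_Diff) (use finite_subset[OF removed_segs_subset] card_segs(1)[OF assms] in blast)
  also have "\<dots> \<le> mu (segs P) D_adj"
    using card_le_mu[OF card_segs(1)[OF assms] mv_set_segs_minus_removed] .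
  finally show ?thesis .
qed

end

section \<open>Rotating the hull enumeration\<close>

lemma clockwise_polygon_rotate:
  assumes "clockwise_hull_enum P m v" "0 < m"
  shows "clockwise_polygon P m (\<lambda>k. v ((k + i) mod m))"
proof
  have bij: "bij_betw v {..<m} (hull_pts P)"
    and edge: "\<And>j p. j < m \<Longrightarrow> p \<in> P \<Longrightarrow> p \<noteq> v j \<Longrightarrow> p \<noteq> v (Suc j mod m) \<Longrightarrow>
      cross (v (Suc j mod m) - v j) (p - v j) < 0"
    using assms(1) unfolding clockwise_hull_enum_def by blast+
  show "v ((k mod m + i) mod m) = v ((k + i) mod m)" for k
    by (simp add: mod_add_left_eq)
  show "v ((k + i) mod m) \<in> P" for k
    using bij_betwE[OF bij] assms(2) unfolding hull_pts_def by auto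
  show "inj_on (\<lambda>k. v ((k + i) mod m)) {..<m}"
  proof (rule inj_onI)
    fix a b
    assume ab: "a \<in> {..<m}" "b \<in> {..<m}" and "v ((a + i) mod m) = v ((b + i) mod m)"
    then have "(a + i) mod m = (b + i) mod m"
      using bij_betw_imp_inj_on[OF bij] assms(2) by (auto dest: inj_onD)
    then have "a mod m = b mod m"
      by (simp add: nat_mod_eq_iff)
    then show "a = b"
      using ab by simp
  qed
  show "orient (v ((k + i) mod m)) (v ((Suc k + i) mod m)) p < 0"
    if "p \<in> P" "p \<noteq> v ((k + i) mod m)" "p \<noteq> v ((Suc k + i) mod m)" for k p
  proof -
    have "Suc ((k + i) mod m) mod m = (Suc k + i) mod m"
      by (simp add: mod_Suc_eq)
    then show ?thesis
      using edge[of "(k + i) mod m" p] that assms(2) unfolding orient_def by simp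
  qed
qed

lemma good_triangle_rotated:
  fixes v :: "nat \<Rightarrow> pt" and m i :: nat and W defines "W \<equiv> \<lambda>k. v ((k + i) mod m)"
  assumes m: "6 \<le> m" and gt: "good_triangle P m v x i"
  shows "x \<in> P" "x \<notin> hull_pts P" "x \<in> convex hull {W 0, W 1, W 2, W (m - 1)}"
    and "\<And>p q. \<lbrakk>p \<in> P; q \<in> P; p \<noteq> q; {p, q} \<notin> {{x, W 0}, {x, W 1}, {W 0, W 1}};
      closed_segment p q \<inter> closed_segment x (W 0) \<noteq> {};
      closed_segment p q \<inter> closed_segment x (W 1) \<noteq> {};
      closed_segment p q \<inter> closed_segment (W 0) (W 1) \<noteq> {}\<rbrakk>
      \<Longrightarrow> {p, q} \<in> {{W 0, W 2}, {W 0, W 3}, {W 1, W (m - 2)}, {W 1, W (m - 1)}}"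
proof -
  have W: "W 0 = v (i mod m)" "W 1 = v ((i + 1) mod m)" "W 2 = v ((i + 2) mod m)"
    "W 3 = v ((i + 3) mod m)" "W (m - 2) = v ((i + m - 2) mod m)" "W (m - 1) = v ((i + m - 1) mod m)"
  proof -
    have "m - 2 + i = i + m - 2" "m - 1 + i = i + m - 1"
      using m by simp_all
    then show "W 0 = v (i mod m)" "W 1 = v ((i + 1) mod m)" "W 2 = v ((i + 2) mod m)"
      "W 3 = v ((i + 3) mod m)" "W (m - 2) = v ((i + m - 2) mod m)" "W (m - 1) = v ((i + m - 1) mod m)"
      unfolding W_def by (simp_all add: add.commute)
  qed
  note good = gt[unfolded good_triangle_def Let_def, folded W]
  show "x \<in> P" "x \<notin> hull_pts P" "x \<in> convex hull {W 0, W 1, W 2, W (m - 1)}"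
    using good interior_subset by blast+
  fix p q
  assume pq: "p \<in> P" "q \<in> P" "p \<noteq> q" and "{p, q} \<notin> {{x, W 0}, {x, W 1}, {W 0, W 1}}"
    and meets: "closed_segment p q \<inter> closed_segment x (W 0) \<noteq> {}"
      "closed_segment p q \<inter> closed_segment x (W 1) \<noteq> {}"
      "closed_segment p q \<inter> closed_segment (W 0) (W 1) \<noteq> {}"
  then have "closed_segment p q \<notin>
      {closed_segment x (W 0), closed_segment x (W 1), closed_segment (W 0) (W 1)}"
    by simp
  moreover have "closed_segment p q \<in> segs P"
    using pq by (rule closed_segment_in_segs)
  ultimately have "closed_segment p q \<in> {closed_segment (W 0) (W 2), closed_segment (W 0) (W 3),
      closed_segment (W 1) (W (m - 2)), closed_segment (W 1) (W (m - 1))}"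
    using good meets by blast
  then show "{p, q} \<in> {{W 0, W 2}, {W 0, W 3}, {W 1, W (m - 2)}, {W 1, W (m - 1)}}"
    by simp
qed

lemma good_triangle_config_rotate:
  assumes "general_position P" "6 \<le> m" "clockwise_hull_enum P m v" "good_triangle P m v x i"
  shows "good_triangle_config P m (\<lambda>k. v ((k + i) mod m)) x"
proof (intro good_triangle_config.intro good_triangle_config_axioms.intro)
  note rotated = good_triangle_rotated[OF assms(2,4)]
  show "clockwise_polygon P m (\<lambda>k. v ((k + i) mod m))"
    using assms(2,3) by (intro clockwise_polygon_rotate) auto
  show "orient a b c \<noteq> 0" if "a \<in> P" "b \<in> P" "c \<in> P" "a \<noteq> b" "a \<noteq> c" "b \<noteq> c" for a b c
    using general_position_orient_neq_0[OF assms(1)] that by blast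
  have "v ((k + i) mod m) \<in> hull_pts P" for k
    using assms(2,3) unfolding clockwise_hull_enum_def by (auto dest: bij_betwE)
  then show "x \<noteq> v ((k + i) mod m)" for k
    using rotated(2) by metis
qed (use assms(2) good_triangle_rotated[OF assms(2,4)] in simp_all)

theorem proposition12:
  fixes P :: "pt set" and n m :: nat
  assumes "finite P" and "card P = n"
    and "general_position P"
    and "m = card (hull_pts P)" and "m \<ge> 6"
    and "has_good_triangle P"
  shows "mu (segs P) D_adj \<ge> (n choose 2) - 9"
proof -
  obtain v x i where "clockwise_hull_enum P m v" "good_triangle P m v x i"
    using assms(6) unfolding has_good_triangle_def assms(4)[symmetric] by blast
  then interpret good_triangle_config P m "\<lambda>k. v ((k + i) mod m)" x
    using assms(3,5) by (intro good_triangle_config_rotate)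
  show ?thesis
    using card_segs_minus_9_le_mu[OF assms(1)] card_segs(2)[OF assms(1)] assms(2) by simp
qed

end
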